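(* Let $n\geq2$ be finite. If $\mathfrak A\in SA_n$ is completely representable, then so is its minimal completion $\mathrm{Cm}\,\mathrm{At}\mathfrak A$.
   Context: $SA_n=\mathbf{Mod}(\Sigma'_n)$, where $\Sigma'_n$ (signature $\wedge,-,s^i_j,s_{ij}$, $i\neq j<n$) consists of the Boolean axioms, equations saying each $s^i_j,s_{ij}$ is a Boolean endomorphism, and $t_1(x)=t_2(x)$ for all words $t_1,t_2$ with the same associated map in ${}^nn$ (words map to compositions of the transpositions $[i,j]$ and replacements $[i/j]$, where $[i/j]$ sends $i$ to $j$ and fixes the rest). A completely representable algebra is atomic; for atomic $\mathfrak A$ the minimal completion is the complex algebra of its atom structure: universe $\mathcal P(\mathrm{At}\mathfrak A)$ with Boolean set operations and, for each unary operator $f$, $f(Y)=\{a\in\mathrm{At}\mathfrak A:\exists b\in Y,\ a\leq f(b)\}$; $\mathfrak A$ embeds in it via $x\mapsto\{a\in\mathrm{At}\mathfrak A:a\le x\}$. $\mathfrak B$ is completely representable if there is an injective homomorphism $g:\mathfrak B\to\wp(D)$ with $D$ dipermutable (closed under $s\mapsto s\circ[i/j]$ and $s\mapsto s\circ[i,j]$) and $g(\prod Y)=\bigcap g[Y]$ whenever $\prod Y$ exists; $\wp(D)$ carries $\cap$, complement relative to $D$, $S^i_j(X)=\{q\in D:q\circ[i/j]\in X\}$, $S_{ij}(X)=\{q\in D:q\circ[i,j]\in X\}$. *)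

theory Defs
  imports "HOL-Library.FuncSet"
begin

text \<open>An algebra of signature (meet, complement, s^i_j, s_ij), with an explicit carrier.
  sub i j is the operation s^i_j (associated map [i/j]), swp i j is s_ij
  (associated map the transposition [i,j]).\<close>

record 'a sa_alg =
  carrier :: "'a set"
  meet :: "'a \<Rightarrow> 'a \<Rightarrow> 'a"
  cmpl :: "'a \<Rightarrow> 'a"
  sub :: "nat \<Rightarrow> nat \<Rightarrow> 'a \<Rightarrow> 'a"
  swp :: "nat \<Rightarrow> nat \<Rightarrow> 'a \<Rightarrow> 'a"

text \<open>Boolean axioms in the signature (meet, complement): commutativity,
  associativity and (the dual of) Huntington's axiom.\<close>

definition boolean_alg :: "'a sa_alg \<Rightarrow> bool" where
  "boolean_alg A \<longleftrightarrow>
     carrier A \<noteq> {} \<and>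
     (\<forall>x\<in>carrier A. \<forall>y\<in>carrier A. meet A x y \<in> carrier A) \<and>
     (\<forall>x\<in>carrier A. cmpl A x \<in> carrier A) \<and>
     (\<forall>x\<in>carrier A. \<forall>y\<in>carrier A. meet A x y = meet A y x) \<and>
     (\<forall>x\<in>carrier A. \<forall>y\<in>carrier A. \<forall>z\<in>carrier A.
         meet A (meet A x y) z = meet A x (meet A y z)) \<and>
     (\<forall>x\<in>carrier A. \<forall>y\<in>carrier A.
         meet A (cmpl A (meet A (cmpl A x) y)) (cmpl A (meet A (cmpl A x) (cmpl A y))) = x)"

definition bool_endo :: "'a sa_alg \<Rightarrow> ('a \<Rightarrow> 'a) \<Rightarrow> bool" where
  "bool_endo A f \<longleftrightarrow>
     (\<forall>x\<in>carrier A. f x \<in> carrier A) \<and>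
     (\<forall>x\<in>carrier A. \<forall>y\<in>carrier A. f (meet A x y) = meet A (f x) (f y)) \<and>
     (\<forall>x\<in>carrier A. f (cmpl A x) = cmpl A (f x))"

datatype letter = Sub nat nat | Swp nat nat

fun valid_letter :: "nat \<Rightarrow> letter \<Rightarrow> bool" where
  "valid_letter n (Sub i j) \<longleftrightarrow> i \<noteq> j \<and> i < n \<and> j < n"
| "valid_letter n (Swp i j) \<longleftrightarrow> i \<noteq> j \<and> i < n \<and> j < n"

definition repl :: "nat \<Rightarrow> nat \<Rightarrow> nat \<Rightarrow> nat" where
  "repl i j = id(i := j)"

definition transp :: "nat \<Rightarrow> nat \<Rightarrow> nat \<Rightarrow> nat" where
  "transp i j = id(i := j, j := i)"

fun letter_map :: "letter \<Rightarrow> nat \<Rightarrow> nat" where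
  "letter_map (Sub i j) = repl i j"
| "letter_map (Swp i j) = transp i j"

fun letter_op :: "'a sa_alg \<Rightarrow> letter \<Rightarrow> 'a \<Rightarrow> 'a" where
  "letter_op A (Sub i j) = sub A i j"
| "letter_op A (Swp i j) = swp A i j"

text \<open>The word f1 f2 ... fk acts as x \<mapsto> f1 (f2 (... (fk x))) and has associated
  map the composition [f1] \<circ> [f2] \<circ> ... \<circ> [fk] (the convention matching the
  set-theoretic operations S^i_j X = {q. q \<circ> [i/j] \<in> X}).\<close>

definition word_op :: "'a sa_alg \<Rightarrow> letter list \<Rightarrow> 'a \<Rightarrow> 'a" where
  "word_op A w = foldr (\<lambda>l f. letter_op A l \<circ> f) w id"

definition word_map :: "letter list \<Rightarrow> nat \<Rightarrow> nat" where
  "word_map w = foldr (\<lambda>l f. letter_map l \<circ> f) w id"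

definition SA :: "nat \<Rightarrow> 'a sa_alg \<Rightarrow> bool" where
  "SA n A \<longleftrightarrow>
     boolean_alg A \<and>
     (\<forall>i j. i \<noteq> j \<and> i < n \<and> j < n \<longrightarrow> bool_endo A (sub A i j) \<and> bool_endo A (swp A i j)) \<and>
     (\<forall>w1 w2. list_all (valid_letter n) w1 \<and> list_all (valid_letter n) w2 \<and>
              (\<forall>k<n. word_map w1 k = word_map w2 k) \<longrightarrow>
              (\<forall>x\<in>carrier A. word_op A w1 x = word_op A w2 x))"

definition leq :: "'a sa_alg \<Rightarrow> 'a \<Rightarrow> 'a \<Rightarrow> bool" where
  "leq A x y \<longleftrightarrow> meet A x y = x"

definition zero :: "'a sa_alg \<Rightarrow> 'a" where
  "zero A = meet A (SOME x. x \<in> carrier A) (cmpl A (SOME x. x \<in> carrier A))"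

definition atoms :: "'a sa_alg \<Rightarrow> 'a set" where
  "atoms A = {a \<in> carrier A. a \<noteq> zero A \<and>
       (\<forall>b\<in>carrier A. leq A b a \<longrightarrow> b = zero A \<or> b = a)}"

definition is_inf :: "'a sa_alg \<Rightarrow> 'a set \<Rightarrow> 'a \<Rightarrow> bool" where
  "is_inf A Y p \<longleftrightarrow> p \<in> carrier A \<and> (\<forall>y\<in>Y. leq A p y) \<and>
     (\<forall>z\<in>carrier A. (\<forall>y\<in>Y. leq A z y) \<longrightarrow> leq A z p)"

definition Cm_At :: "'a sa_alg \<Rightarrow> 'a set sa_alg" where
  "Cm_At A =
     \<lparr> carrier = Pow (atoms A),
       meet = (\<inter>),
       cmpl = (\<lambda>Y. atoms A - Y),
       sub = (\<lambda>i j Y. {a \<in> atoms A. \<exists>b\<in>Y. leq A a (sub A i j b)}),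
       swp = (\<lambda>i j Y. {a \<in> atoms A. \<exists>b\<in>Y. leq A a (swp A i j b)}) \<rparr>"

definition dipermutable :: "nat \<Rightarrow> (nat \<Rightarrow> 'u) set \<Rightarrow> bool" where
  "dipermutable n D \<longleftrightarrow>
     D \<subseteq> ({..<n} \<rightarrow>\<^sub>E (UNIV :: 'u set)) \<and>
     (\<forall>i j q. i \<noteq> j \<and> i < n \<and> j < n \<and> q \<in> D \<longrightarrow>
        q \<circ> repl i j \<in> D \<and> q \<circ> transp i j \<in> D)"

definition comp_rep_hom ::
  "nat \<Rightarrow> 'a sa_alg \<Rightarrow> (nat \<Rightarrow> 'u) set \<Rightarrow> ('a \<Rightarrow> (nat \<Rightarrow> 'u) set) \<Rightarrow> bool" where
  "comp_rep_hom n B D g \<longleftrightarrow>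
     (\<forall>x\<in>carrier B. g x \<subseteq> D) \<and>
     inj_on g (carrier B) \<and>
     (\<forall>x\<in>carrier B. \<forall>y\<in>carrier B. g (meet B x y) = g x \<inter> g y) \<and>
     (\<forall>x\<in>carrier B. g (cmpl B x) = D - g x) \<and>
     (\<forall>i j. i \<noteq> j \<and> i < n \<and> j < n \<longrightarrow>
        (\<forall>x\<in>carrier B. g (sub B i j x) = {q \<in> D. q \<circ> repl i j \<in> g x}) \<and>
        (\<forall>x\<in>carrier B. g (swp B i j x) = {q \<in> D. q \<circ> transp i j \<in> g x})) \<and>
     (\<forall>Y p. Y \<subseteq> carrier B \<and> is_inf B Y p \<longrightarrow> g p = D \<inter> \<Inter> (g ` Y))"

definition completely_representable :: "nat \<Rightarrow> 'a sa_alg \<Rightarrow> 'u itself \<Rightarrow> bool" where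
  "completely_representable n B (_ :: 'u itself) \<longleftrightarrow>
     (\<exists>(D :: (nat \<Rightarrow> 'u) set) g. dipermutable n D \<and> comp_rep_hom n B D g)"

end

theory Submission
  imports Defs
begin

text \<open>Under a complete representation g of A on D the images of the atoms partition D:
  they are disjoint because g preserves meets and is injective, and they cover D because
  the infimum of all elements whose image contains a point q would otherwise be zero,
  while g maps that infimum onto a set containing q. Hence sending a set of atoms X to
  the union of the images of its members is a complete representation of
  \<open>Cm_At A\<close> on the same base D; the operations s^i_j and s_ij of the complex algebra
  are carried to the set operations because every point of D lies below exactly one atom.\<close>

lemma SA_boolean_alg: "SA n A \<Longrightarrow> boolean_alg A"
  unfolding SA_def by (elim conjE)

lemma SA_operators_closed:
  assumes "SA n A" "i \<noteq> j" "i < n" "j < n" "x \<in> carrier A"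
  shows "sub A i j x \<in> carrier A \<and> swp A i j x \<in> carrier A"
proof -
  have "bool_endo A (sub A i j)" "bool_endo A (swp A i j)"
    using assms(1-4) unfolding SA_def by blast+
  with assms(5) show ?thesis unfolding bool_endo_def by blast
qed

lemma carrier_Cm_At: "carrier (Cm_At A) = Pow (atoms A)"
  by (simp add: Cm_At_def)

lemma leq_Cm_At: "leq (Cm_At A) U V \<longleftrightarrow> U \<subseteq> V"
  by (auto simp: leq_def Cm_At_def)

lemma is_inf_Cm_At_iff: "is_inf (Cm_At A) Ys P \<longleftrightarrow> P = atoms A \<inter> \<Inter> Ys"
proof
  assume "is_inf (Cm_At A) Ys P"
  then have lower: "P \<subseteq> atoms A" "\<And>Y. Y \<in> Ys \<Longrightarrow> P \<subseteq> Y"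
    and greatest: "\<And>Z. Z \<subseteq> atoms A \<Longrightarrow> (\<And>Y. Y \<in> Ys \<Longrightarrow> Z \<subseteq> Y) \<Longrightarrow> Z \<subseteq> P"
    unfolding is_inf_def leq_Cm_At carrier_Cm_At by auto
  have "atoms A \<inter> \<Inter> Ys \<subseteq> P"
    by (rule greatest) auto
  with lower show "P = atoms A \<inter> \<Inter> Ys" by blast
next
  assume "P = atoms A \<inter> \<Inter> Ys"
  then show "is_inf (Cm_At A) Ys P"
    unfolding is_inf_def leq_Cm_At carrier_Cm_At by blast
qed

locale complete_representation =
  fixes n :: nat and A :: "'a sa_alg" and D :: "(nat \<Rightarrow> 'u) set" and g :: "'a \<Rightarrow> (nat \<Rightarrow> 'u) set"
  assumes boolean: "boolean_alg A"
    and hom: "comp_rep_hom n A D g"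
begin

lemma carrier_nonempty: "carrier A \<noteq> {}"
  and meet_closed: "x \<in> carrier A \<Longrightarrow> y \<in> carrier A \<Longrightarrow> meet A x y \<in> carrier A"
  and cmpl_closed: "x \<in> carrier A \<Longrightarrow> cmpl A x \<in> carrier A"
  using boolean unfolding boolean_alg_def by auto

lemma image_subset: "x \<in> carrier A \<Longrightarrow> g x \<subseteq> D"
  and inj: "inj_on g (carrier A)"
  and image_meet: "x \<in> carrier A \<Longrightarrow> y \<in> carrier A \<Longrightarrow> g (meet A x y) = g x \<inter> g y"
  and image_cmpl: "x \<in> carrier A \<Longrightarrow> g (cmpl A x) = D - g x"
  and image_inf: "Y \<subseteq> carrier A \<Longrightarrow> is_inf A Y p \<Longrightarrow> g p = D \<inter> \<Inter> (g ` Y)"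
  using hom unfolding comp_rep_hom_def by auto

lemma image_eq_iff: "x \<in> carrier A \<Longrightarrow> y \<in> carrier A \<Longrightarrow> g x = g y \<longleftrightarrow> x = y"
  using inj by (auto dest: inj_onD)

lemma leq_iff_image_subset:
  assumes "x \<in> carrier A" "y \<in> carrier A"
  shows "leq A x y \<longleftrightarrow> g x \<subseteq> g y"
proof -
  have "leq A x y \<longleftrightarrow> g (meet A x y) = g x"
    unfolding leq_def using assms by (simp add: image_eq_iff meet_closed)
  also have "\<dots> \<longleftrightarrow> g x \<subseteq> g y"
    using assms by (auto simp: image_meet)
  finally show ?thesis .
qed

lemma zero_closed: "zero A \<in> carrier A"
  and image_zero: "g (zero A) = {}"
proof -
  let ?c = "SOME x. x \<in> carrier A"
  have c: "?c \<in> carrier A"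
    using carrier_nonempty by (simp add: some_in_eq)
  show "zero A \<in> carrier A"
    unfolding zero_def using c by (simp add: meet_closed cmpl_closed)
  show "g (zero A) = {}"
    unfolding zero_def using c by (auto simp: image_meet cmpl_closed image_cmpl)
qed

lemma eq_zero_iff_image_empty: "x \<in> carrier A \<Longrightarrow> x = zero A \<longleftrightarrow> g x = {}"
  using image_eq_iff[OF _ zero_closed] image_zero by auto

lemma atoms_iff_image:
  "a \<in> atoms A \<longleftrightarrow> a \<in> carrier A \<and> g a \<noteq> {} \<and>
     (\<forall>b\<in>carrier A. g b \<subseteq> g a \<longrightarrow> g b = {} \<or> g b = g a)"
proof (cases "a \<in> carrier A")
  case True
  then have "(\<forall>b\<in>carrier A. leq A b a \<longrightarrow> b = zero A \<or> b = a) \<longleftrightarrow>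
      (\<forall>b\<in>carrier A. g b \<subseteq> g a \<longrightarrow> g b = {} \<or> g b = g a)"
    by (simp add: leq_iff_image_subset eq_zero_iff_image_empty image_eq_iff)
  then show ?thesis
    unfolding atoms_def using True eq_zero_iff_image_empty by auto
qed (simp add: atoms_def)

lemma atom_in_carrier: "a \<in> atoms A \<Longrightarrow> a \<in> carrier A"
  by (simp add: atoms_def)

lemma atom_image_nonempty: "a \<in> atoms A \<Longrightarrow> g a \<noteq> {}"
  by (simp add: atoms_iff_image)

lemma atom_leq_if_images_meet:
  assumes a: "a \<in> atoms A" and x: "x \<in> carrier A" and q: "q \<in> g a" "q \<in> g x"
  shows "leq A a x"
proof -
  have ac: "a \<in> carrier A" using a by (rule atom_in_carrier)
  have "g (meet A a x) \<subseteq> g a" and "q \<in> g (meet A a x)"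
    using ac x q by (auto simp: image_meet)
  then have "g (meet A a x) = g a"
    using a meet_closed[OF ac x] unfolding atoms_iff_image by blast
  then show ?thesis
    using ac x by (auto simp: image_meet leq_iff_image_subset)
qed

lemma atom_images_disjoint:
  assumes "a \<in> atoms A" "b \<in> atoms A" "q \<in> g a" "q \<in> g b"
  shows "a = b"
proof -
  have "leq A a b" and "leq A b a"
    using assms by (auto intro: atom_leq_if_images_meet atom_in_carrier)
  then show ?thesis
    using assms by (auto simp: leq_iff_image_subset atom_in_carrier image_eq_iff)
qed

lemma inf_of_filter_is_zero:
  assumes q: "q \<in> D"
    and no_least: "\<not> (\<exists>z\<in>carrier A. q \<in> g z \<and> (\<forall>y\<in>carrier A. q \<in> g y \<longrightarrow> g z \<subseteq> g y))"
  shows "is_inf A {y \<in> carrier A. q \<in> g y} (zero A)"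
  unfolding is_inf_def
proof (intro conjI ballI impI zero_closed)
  fix y assume "y \<in> {y \<in> carrier A. q \<in> g y}"
  then show "leq A (zero A) y"
    by (simp add: leq_iff_image_subset zero_closed image_zero)
next
  fix z assume z: "z \<in> carrier A" and lower: "\<forall>y\<in>{y \<in> carrier A. q \<in> g y}. leq A z y"
  then have lower': "\<forall>y\<in>carrier A. q \<in> g y \<longrightarrow> g z \<subseteq> g y"
    by (simp add: leq_iff_image_subset)
  then have "q \<notin> g z" using z no_least by blast
  then have "q \<in> g (cmpl A z)"
    using z q by (simp add: image_cmpl)
  then have "g z \<subseteq> g (cmpl A z)"
    using lower' z by (simp add: cmpl_closed)
  then have "g z = {}" using z by (auto simp: image_cmpl)
  then show "leq A z (zero A)"
    using z by (simp add: leq_iff_image_subset zero_closed image_zero)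
qed

lemma atom_images_cover:
  assumes q: "q \<in> D"
  shows "\<exists>a\<in>atoms A. q \<in> g a"
proof (cases "\<exists>z\<in>carrier A. q \<in> g z \<and> (\<forall>y\<in>carrier A. q \<in> g y \<longrightarrow> g z \<subseteq> g y)")
  case True
  then obtain z where z: "z \<in> carrier A" "q \<in> g z"
    and least: "\<forall>y\<in>carrier A. q \<in> g y \<longrightarrow> g z \<subseteq> g y" by blast
  have "g b = {} \<or> g b = g z" if b: "b \<in> carrier A" "g b \<subseteq> g z" for b
  proof (cases "q \<in> g b")
    case True
    then show ?thesis using least b by blast
  next
    case False
    then have "g z \<subseteq> D - g b"
      using least b q by (metis Diff_iff cmpl_closed image_cmpl)
    then show ?thesis using b by blast
  qed
  then have "z \<in> atoms A"
    using z unfolding atoms_iff_image by blast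
  then show ?thesis using z by blast
next
  case False
  have "g (zero A) = D \<inter> \<Inter> (g ` {y \<in> carrier A. q \<in> g y})"
    by (rule image_inf) (use inf_of_filter_is_zero[OF q False] in auto)
  then show ?thesis using q image_zero by blast
qed

definition atom_union :: "'a set \<Rightarrow> (nat \<Rightarrow> 'u) set" where
  "atom_union X = \<Union> (g ` X)"

lemma atom_union_subset: "X \<subseteq> atoms A \<Longrightarrow> atom_union X \<subseteq> D"
  unfolding atom_union_def using image_subset atom_in_carrier by blast

lemma atom_union_mono_iff:
  assumes "X \<subseteq> atoms A" "Y \<subseteq> atoms A"
  shows "atom_union X \<subseteq> atom_union Y \<longleftrightarrow> X \<subseteq> Y"
proof
  assume sub: "atom_union X \<subseteq> atom_union Y"
  show "X \<subseteq> Y"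
  proof
    fix a assume a: "a \<in> X"
    obtain q where q: "q \<in> g a" using a assms atom_image_nonempty by blast
    then obtain b where "b \<in> Y" "q \<in> g b"
      using a sub unfolding atom_union_def by blast
    then show "a \<in> Y" using atom_images_disjoint[of a b q] a q assms by blast
  qed
qed (auto simp: atom_union_def)

lemma atom_union_inj: "inj_on atom_union (Pow (atoms A))"
  by (rule inj_onI) (metis PowD atom_union_mono_iff order_refl subset_antisym)

lemma atom_union_Int:
  assumes "X \<subseteq> atoms A" "Y \<subseteq> atoms A"
  shows "atom_union (X \<inter> Y) = atom_union X \<inter> atom_union Y"
  using assms atom_images_disjoint unfolding atom_union_def by blast

lemma atom_union_Diff:
  assumes "X \<subseteq> atoms A"
  shows "atom_union (atoms A - X) = D - atom_union X"
proof -
  have "atom_union (atoms A) = D"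
    using atom_union_subset atom_images_cover unfolding atom_union_def by blast
  moreover have "atom_union (atoms A) = atom_union (atoms A - X) \<union> atom_union X"
    using assms unfolding atom_union_def by blast
  moreover have "atom_union (atoms A - X) \<inter> atom_union X = {}"
    using assms atom_images_disjoint unfolding atom_union_def by blast
  ultimately show ?thesis by blast
qed

lemma atom_union_operator:
  assumes closed: "\<forall>x\<in>carrier A. f x \<in> carrier A"
    and rep: "\<forall>x\<in>carrier A. g (f x) = {q \<in> D. q \<circ> r \<in> g x}"
    and Y: "Y \<subseteq> atoms A"
  shows "atom_union {a \<in> atoms A. \<exists>b\<in>Y. leq A a (f b)} = {q \<in> D. q \<circ> r \<in> atom_union Y}"
proof (intro set_eqI iffI)
  fix q assume "q \<in> atom_union {a \<in> atoms A. \<exists>b\<in>Y. leq A a (f b)}"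
  then obtain a b where a: "a \<in> atoms A" and b: "b \<in> Y" and le: "leq A a (f b)" and qa: "q \<in> g a"
    unfolding atom_union_def by blast
  have bc: "b \<in> carrier A" using b Y atom_in_carrier by blast
  have "q \<in> g (f b)"
    using le qa a bc closed by (auto simp: leq_iff_image_subset atom_in_carrier)
  then show "q \<in> {q \<in> D. q \<circ> r \<in> atom_union Y}"
    using rep bc b unfolding atom_union_def by blast
next
  fix q assume "q \<in> {q \<in> D. q \<circ> r \<in> atom_union Y}"
  then obtain b where q: "q \<in> D" and b: "b \<in> Y" and qb: "q \<circ> r \<in> g b"
    unfolding atom_union_def by blast
  have bc: "b \<in> carrier A" using b Y atom_in_carrier by blast
  obtain a where a: "a \<in> atoms A" and qa: "q \<in> g a"
    using atom_images_cover[OF q] by blast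
  have "leq A a (f b)"
    using atom_leq_if_images_meet[OF a _ qa] closed rep bc q qb by blast
  then show "q \<in> atom_union {a \<in> atoms A. \<exists>b\<in>Y. leq A a (f b)}"
    using a b qa unfolding atom_union_def by blast
qed

lemma atom_union_Inter:
  assumes Ys: "Ys \<subseteq> Pow (atoms A)"
  shows "atom_union (atoms A \<inter> \<Inter> Ys) = D \<inter> \<Inter> (atom_union ` Ys)"
proof (intro set_eqI iffI)
  fix q assume "q \<in> atom_union (atoms A \<inter> \<Inter> Ys)"
  then obtain a where a: "a \<in> atoms A" "\<forall>Y\<in>Ys. a \<in> Y" and qa: "q \<in> g a"
    unfolding atom_union_def by blast
  have "q \<in> D" using qa a image_subset atom_in_carrier by blast
  moreover have "q \<in> atom_union Y" if "Y \<in> Ys" for Y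
    using that a qa unfolding atom_union_def by blast
  ultimately show "q \<in> D \<inter> \<Inter> (atom_union ` Ys)" by blast
next
  fix q assume q: "q \<in> D \<inter> \<Inter> (atom_union ` Ys)"
  obtain a where a: "a \<in> atoms A" and qa: "q \<in> g a"
    using atom_images_cover q by blast
  have "a \<in> Y" if Y: "Y \<in> Ys" for Y
  proof -
    obtain b where "b \<in> Y" "q \<in> g b"
      using q Y unfolding atom_union_def by blast
    moreover have "b \<in> atoms A" using Y Ys \<open>b \<in> Y\<close> by blast
    ultimately show ?thesis using atom_images_disjoint[OF a _ qa] by blast
  qed
  then show "q \<in> atom_union (atoms A \<inter> \<Inter> Ys)"
    using a qa unfolding atom_union_def by blast
qed

lemma comp_rep_hom_Cm_At:
  assumes closed: "\<And>i j x. i \<noteq> j \<Longrightarrow> i < n \<Longrightarrow> j < n \<Longrightarrow> x \<in> carrier A \<Longrightarrow>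
      sub A i j x \<in> carrier A \<and> swp A i j x \<in> carrier A"
  shows "comp_rep_hom n (Cm_At A) D atom_union"
  unfolding comp_rep_hom_def
proof (intro conjI allI impI ballI)
  fix i j X assume ij: "i \<noteq> j \<and> i < n \<and> j < n" and X: "X \<in> carrier (Cm_At A)"
  have X': "X \<subseteq> atoms A" using X by (simp add: carrier_Cm_At)
  have "\<forall>x\<in>carrier A. g (sub A i j x) = {q \<in> D. q \<circ> repl i j \<in> g x}"
    and "\<forall>x\<in>carrier A. g (swp A i j x) = {q \<in> D. q \<circ> transp i j \<in> g x}"
    using hom ij unfolding comp_rep_hom_def by blast+
  moreover have "\<forall>x\<in>carrier A. sub A i j x \<in> carrier A"
    and "\<forall>x\<in>carrier A. swp A i j x \<in> carrier A"
    using closed ij by blast+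
  ultimately show "atom_union (sub (Cm_At A) i j X) = {q \<in> D. q \<circ> repl i j \<in> atom_union X}"
    and "atom_union (swp (Cm_At A) i j X) = {q \<in> D. q \<circ> transp i j \<in> atom_union X}"
    unfolding Cm_At_def sa_alg.simps using X' by (simp_all add: atom_union_operator)
next
  fix Ys P assume "Ys \<subseteq> carrier (Cm_At A) \<and> is_inf (Cm_At A) Ys P"
  then have "Ys \<subseteq> Pow (atoms A)" and "P = atoms A \<inter> \<Inter> Ys"
    by (simp_all add: carrier_Cm_At is_inf_Cm_At_iff)
  then show "atom_union P = D \<inter> \<Inter> (atom_union ` Ys)"
    by (simp add: atom_union_Inter)
next
  show "inj_on atom_union (carrier (Cm_At A))"
    by (simp add: carrier_Cm_At atom_union_inj)
qed (simp_all add: Cm_At_def atom_union_subset atom_union_Int atom_union_Diff)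

end

theorem theorem4p20:
  fixes n :: nat and A :: "'a sa_alg"
  assumes "n \<ge> 2"
    and "SA n A"
    and "completely_representable n A TYPE('u)"
  shows "completely_representable n (Cm_At A) TYPE('u)"
proof -
  obtain D :: "(nat \<Rightarrow> 'u) set" and g where D: "dipermutable n D" and g: "comp_rep_hom n A D g"
    using assms(3) unfolding completely_representable_def by blast
  interpret complete_representation n A D g
    using SA_boolean_alg[OF assms(2)] g by unfold_locales
  have "comp_rep_hom n (Cm_At A) D atom_union"
    using SA_operators_closed[OF assms(2)] by (rule comp_rep_hom_Cm_At)
  with D show ?thesis
    unfolding completely_representable_def by blast
qed

end
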